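(* In the worst case, no algorithm that uses only one disk, accessed by sequential passes, can compute the Burrows–Wheeler transform of a text of length $n$ when the product of the size of its internal memory in bits and its number of passes is $o(n)$; likewise, no such algorithm can invert the Burrows–Wheeler transform (recover $T$ from $\mathrm{bwt}(T)$) when this product is $o(n)$.
   Context: Model: a machine with an internal memory of a given number of bits and a single disk; the input initially resides on the disk, the output must eventually reside on the disk, and the disk is accessed only by sequential passes (scans). For a text $T[1,n]$ over a finite ordered alphabet with a unique smallest terminating character $T[n]$, the suffix array $\mathrm{sa}[1,n]$ lists starting positions of the suffixes of $T$ in lexicographic order, and $\mathrm{bwt}(T)[i] = T[\mathrm{sa}[i]-1]$ if $\mathrm{sa}[i]>1$, $\mathrm{bwt}(T)[i]=T[n]$ if $\mathrm{sa}[i]=1$. "In the worst case" means: for any such algorithm whose (memory size in bits) $\times$ (number of passes) is $o(n)$, there are inputs of length $n$ (for infinitely many $n$) on which it does not produce the correct output. *)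

theory Defs
  imports Main "HOL-Library.Landau_Symbols"
begin

definition valid_text :: "nat set \<Rightarrow> nat list \<Rightarrow> bool" where
  "valid_text \<Sigma> T \<longleftrightarrow> T \<noteq> [] \<and> set T \<subseteq> \<Sigma> \<and> (\<forall>i < length T - 1. last T < T ! i)"

definition suf_less :: "nat list \<Rightarrow> nat \<Rightarrow> nat \<Rightarrow> bool" where
  "suf_less T i j \<longleftrightarrow> (drop i T, drop j T) \<in> lexord {(a, b). a < b}"

definition sa :: "nat list \<Rightarrow> nat list" where
  "sa T = (THE l. distinct l \<and> set l = {0..<length T} \<and> sorted_wrt (suf_less T) l)"

definition bwt :: "nat list \<Rightarrow> nat list" where
  "bwt T = map (\<lambda>i. if i = 0 then last T else T ! (i - 1)) (sa T)"

text \<open>A machine: finite control (states are naturals; a memory of b bits means the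
states used are those below 2^b), a single disk (cells indexed by nat, symbols are
naturals, unbounded to the right) with one head.
A pass is a maximal sequence of head moves in one direction; the count starts at 1
(the initial left-to-right scan) and increases at every change of direction.\<close>

datatype dir = Lm | Rm | Sm

record machine =
  delta :: "nat \<Rightarrow> nat \<Rightarrow> nat \<times> nat \<times> dir"
  final :: "nat \<Rightarrow> bool"

record config =
  st :: nat
  pos :: nat
  tape :: "nat \<Rightarrow> nat"
  lastdir :: dir
  passes :: nat

definition step :: "machine \<Rightarrow> config \<Rightarrow> config" where
  "step M c = (if final M (st c) then c else
     (case delta M (st c) (tape c (pos c)) of (q', g, d) \<Rightarrow>
       c\<lparr> st := q', tape := (tape c)(pos c := g),
          pos := (case d of Lm \<Rightarrow> pos c - 1 | Rm \<Rightarrow> pos c + 1 | Sm \<Rightarrow> pos c),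
          lastdir := (if d = Sm then lastdir c else d),
          passes := (if d = Sm \<or> d = lastdir c then passes c else passes c + 1) \<rparr>))"

definition disk_of :: "nat \<Rightarrow> nat list \<Rightarrow> nat \<Rightarrow> nat" where
  "disk_of blank w = (\<lambda>i. if i < length w then w ! i else blank)"

definition init :: "nat \<Rightarrow> nat list \<Rightarrow> config" where
  "init blank w = \<lparr> st = 0, pos = 0, tape = disk_of blank w, lastdir = Rm, passes = 1 \<rparr>"

definition uses_memory :: "machine \<Rightarrow> nat \<Rightarrow> bool" where
  "uses_memory M b \<longleftrightarrow> (\<forall>q < 2 ^ b. \<forall>g. fst (delta M q g) < 2 ^ b)"

definition computes :: "machine \<Rightarrow> nat \<Rightarrow> nat \<Rightarrow> nat list \<Rightarrow> nat list \<Rightarrow> bool" where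
  "computes M blank p w out \<longleftrightarrow>
     (\<exists>k. let c = (step M ^^ k) (init blank w) in
        final M (st c) \<and> passes c \<le> p \<and> tape c = disk_of blank out)"

end

theory Submission
  imports Defs "HOL-Library.List_Lexorder" "HOL-Library.Multiset" "HOL-Library.Infinite_Set"
begin

text \<open>Cut the disk between cells \<open>b - 1\<close> and \<open>b\<close>. While the head is right of the cut, the
  first \<open>b\<close> cells do not change, and what happens left of the cut is determined by their
  contents and the state in which the head last crossed the cut leftwards. Hence the final
  contents of the first \<open>b\<close> cells are a function of their initial contents and of the crossing
  sequence, the list of states entered at the left crossings. Every left crossing costs two passes,
  so with \<open>2 ^ m\<close> states and \<open>p\<close> passes there are at most \<open>2 ^ (m p + 1)\<close> crossing sequences.

  The texts \<open>3 ^ k 1 E 0\<close> with \<open>E \<in> {1,2} ^ (k-1)\<close> share their first \<open>k + 1\<close> characters, their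
  BWTs end in \<open>3 ^ (k-1) 0\<close>, and the BWT is injective on valid texts, so their BWTs differ in the
  first \<open>k + 1\<close> characters. Dually, the texts \<open>E 2 1 ^ k 0\<close> with \<open>E \<in> {2,3} ^ (k-1)\<close> have BWTs
  beginning with \<open>1 ^ k 2\<close>. Each family has \<open>2 ^ (k-1)\<close> members of length \<open>n = 2 k + 1\<close>, which
  forces \<open>k \<le> m p + 2\<close>, impossible when \<open>m p = o(n)\<close>.\<close>

section \<open>Suffix arrays\<close>

lemma sorted_wrt_nth_card_less:
  fixes key :: "'b \<Rightarrow> 'a::linorder"
  assumes sorted: "sorted_wrt (\<lambda>i j. key i < key j) l" and x: "x \<in> set l"
  shows "l ! card {y \<in> set l. key y < key x} = x"
proof -
  obtain i where i: "i < length l" and x_eq: "x = l ! i" using x by (metis in_set_conv_nth)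
  have "{y \<in> set l. key y < key x} = set (take i l)"
  proof (intro set_eqI iffI)
    fix y assume "y \<in> set (take i l)"
    then obtain j where "j < i" "y = l ! j" using i by (auto simp: in_set_conv_nth)
    then show "y \<in> {y \<in> set l. key y < key x}"
      using sorted_wrt_nth_less[OF sorted, of j i] i x_eq by auto
  next
    fix y assume y: "y \<in> {y \<in> set l. key y < key x}"
    then obtain j where j: "j < length l" "y = l ! j" by (auto simp: in_set_conv_nth)
    have "j < i"
    proof (rule ccontr)
      assume "\<not> j < i"
      then have "key x \<le> key y"
        using sorted_wrt_nth_less[OF sorted, of i j] i j x_eq by (cases "i = j") auto
      then show False using y by auto
    qed
    then show "y \<in> set (take i l)" using j by (auto simp: in_set_conv_nth)
  qed
  moreover have "distinct l"
    using sorted by (induction l) auto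
  ultimately show ?thesis using i x_eq by (simp add: distinct_card)
qed

lemma suf_less_eq: "suf_less T = (\<lambda>i j. drop i T < drop j T)"
  by (simp add: fun_eq_iff suf_less_def list_less_def)

lemma inj_on_drop: "inj_on (\<lambda>i. drop i xs) {0..<length xs}"
  by (rule inj_onI) (metis atLeastLessThan_iff diff_diff_cancel length_drop less_imp_le_nat)

lemma suffix_sorted_iff_eq_sort_key:
  "distinct l \<and> set l = {0..<length T} \<and> sorted_wrt (suf_less T) l
     \<longleftrightarrow> l = sort_key (\<lambda>i. drop i T) [0..<length T]"
  (is "?spec l \<longleftrightarrow> l = ?l")
proof
  assume l: "?spec l"
  then have "sorted_wrt (<) (map (\<lambda>i. drop i T) l)"
    by (simp add: sorted_wrt_map suf_less_eq)
  moreover have "mset [0..<length T] = mset l"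
    using l by (metis distinct_upt mset_set_set set_upt)
  ultimately show "l = ?l"
    using inj_on_drop[of T] by (intro sort_key_inj_key_eq[symmetric]) (simp_all add: strict_sorted_iff)
next
  assume l: "l = ?l"
  have "distinct (map (\<lambda>i. drop i T) ?l)" using inj_on_drop[of T] by (simp add: distinct_map)
  then have "sorted_wrt (<) (map (\<lambda>i. drop i T) ?l)" by (simp add: strict_sorted_iff)
  then show "?spec l" using l by (simp add: sorted_wrt_map suf_less_eq)
qed

lemma sa_eq_sort_key: "sa T = sort_key (\<lambda>i. drop i T) [0..<length T]"
  by (simp add: sa_def suffix_sorted_iff_eq_sort_key)

lemma mset_sa: "mset (sa T) = mset [0..<length T]"
  by (simp add: sa_eq_sort_key)

lemma set_sa: "set (sa T) = {0..<length T}"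
  by (simp add: sa_eq_sort_key)

lemma length_sa: "length (sa T) = length T"
  by (simp add: sa_eq_sort_key)

lemma sorted_wrt_sa: "sorted_wrt (\<lambda>i j. drop i T < drop j T) (sa T)"
  using suffix_sorted_iff_eq_sort_key[of "sa T" T] by (simp add: sa_eq_sort_key suf_less_eq)

lemma sa_nth_card_less:
  assumes "x < length T"
  shows "sa T ! card {y. y < length T \<and> drop y T < drop x T} = x"
proof -
  have "{y. y < length T \<and> drop y T < drop x T} = {y \<in> set (sa T). drop y T < drop x T}"
    by (auto simp: set_sa)
  then show ?thesis using sorted_wrt_nth_card_less[OF sorted_wrt_sa] assms by (simp add: set_sa)
qed

lemma length_bwt: "length (bwt T) = length T"
  by (simp add: bwt_def length_sa)

lemma bwt_nth: "i < length T \<Longrightarrow> bwt T ! i = (if sa T ! i = 0 then last T else T ! (sa T ! i - 1))"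
  by (simp add: bwt_def length_sa)


section \<open>Injectivity of the Burrows-Wheeler transform\<close>

lemma last_rotate:
  assumes "p < length T"
  shows "last (rotate p T) = (if p = 0 then last T else T ! (p - 1))"
proof (cases "p = 0")
  case False
  have "rotate p T = drop p T @ take p T" using assms by (simp add: rotate_drop_take)
  moreover have ne: "take p T \<noteq> []" using False assms by auto
  moreover have "last (take p T) = T ! (p - 1)"
    using False assms by (simp add: last_conv_nth[OF ne])
  ultimately show ?thesis using False by simp
qed simp

lemma bwt_eq_map_last_rotate: "bwt T = map (\<lambda>p. last (rotate p T)) (sa T)"
  unfolding bwt_def by (rule map_cong) (auto simp: set_sa last_rotate)

lemma last_rotate_Cons_take_rotate:
  assumes "j < length T"
  shows "last (rotate p T) # take j (rotate p T) = take (Suc j) (rotate (p + (length T - 1)) T)"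
proof -
  let ?r = "rotate (p + (length T - 1)) T"
  have ne: "?r \<noteq> []" using assms by auto
  have "rotate1 ?r = rotate (Suc (p + (length T - 1))) T" by simp
  also have "Suc (p + (length T - 1)) = p + length T" using assms by simp
  also have "rotate (p + length T) T = rotate p T"
    by (simp add: rotate_conv_mod[of "p + length T"] rotate_conv_mod[of p])
  finally have "rotate p T = rotate1 ?r" ..
  also have "\<dots> = tl ?r @ [hd ?r]" using ne by (simp add: rotate1_hd_tl)
  finally have "rotate p T = tl ?r @ [hd ?r]" .
  moreover have "take (Suc j) ?r = hd ?r # take j (tl ?r)" using ne by (cases ?r) auto
  ultimately show ?thesis using assms by simp
qed

lemma mset_rotate: "mset (rotate n xs) = mset xs"
  by (metis append_take_drop_id mset_append rotate_drop_take union_commute)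

lemma mset_map_rotate_shift:
  "mset (map (\<lambda>p. f (rotate (p + c) T)) [0..<length T]) = mset (map (\<lambda>p. f (rotate p T)) [0..<length T])"
proof -
  have "map (\<lambda>p. f (rotate (p + c) T)) [0..<length T] = rotate c (map (\<lambda>p. f (rotate p T)) [0..<length T])"
  proof (rule nth_equalityI)
    fix i assume "i < length (map (\<lambda>p. f (rotate (p + c) T)) [0..<length T])"
    then have i: "i < length T" and "(c + i) mod length T < length T" by (cases T; simp)+
    moreover have "rotate (i + c) T = rotate ((c + i) mod length T) T"
      by (metis add.commute rotate_conv_mod)
    ultimately show "map (\<lambda>p. f (rotate (p + c) T)) [0..<length T] ! i
        = rotate c (map (\<lambda>p. f (rotate p T)) [0..<length T]) ! i"
      by (simp add: nth_rotate)
  qed simp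
  then show ?thesis by (simp add: mset_rotate)
qed

text \<open>Since the terminator is the unique smallest character, sorting the rotations of a valid
  text sorts its suffixes.\<close>
lemma rotate_less_rotate_if_drop_less:
  assumes v: "valid_text \<Sigma> T" and p: "p < length T" and q: "q < length T"
    and lt: "drop p T < drop q T"
  shows "rotate p T < rotate q T"
proof -
  let ?n = "length T"
  have T_ne: "T \<noteq> []" using p by auto
  have rp: "rotate p T = drop p T @ take p T" using p by (simp add: rotate_drop_take)
  have rq: "rotate q T = drop q T @ take q T" using q by (simp add: rotate_drop_take)
  from lt have "(drop p T, drop q T) \<in> lexord {(u, v). u < v}" by (simp add: list_less_def)
  then consider (prefix) "length (drop p T) < length (drop q T)" "take (length (drop p T)) (drop q T) = drop p T"
    | (differ) i where "i < min (length (drop p T)) (length (drop q T))"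
        "take i (drop p T) = take i (drop q T)" "drop p T ! i < drop q T ! i"
    by (auto simp: lexord_take_index_conv)
  then show ?thesis
  proof cases
    case prefix
    then have qp: "q < p" using p q by auto
    let ?a = "?n - p"
    have "drop q T ! (?a - 1) = drop p T ! (?a - 1)"
      using prefix by (metis diff_less length_drop nth_take p zero_less_diff zero_less_one)
    then have "T ! (q + ?a - 1) = last T" using p qp by (simp add: last_conv_nth[OF T_ne])
    moreover have "last T < T ! (q + ?a - 1)" using v qp p by (simp add: valid_text_def)
    ultimately show ?thesis by simp
  next
    case (differ i)
    then have "take i (rotate p T) = take i (rotate q T)" "rotate p T ! i < rotate q T ! i"
      "i < min (length (rotate p T)) (length (rotate q T))"
      using rp rq by (simp_all add: nth_append)
    then have "(rotate p T, rotate q T) \<in> lexord {(u, v). u < v}"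
      unfolding lexord_take_index_conv by blast
    then show ?thesis by (simp add: list_less_def)
  qed
qed

lemma take_le_take_lexorder:
  fixes xs ys :: "'a::linorder list"
  assumes "xs \<le> ys"
  shows "take j xs \<le> take j ys"
  using assms
proof (induction j arbitrary: xs ys)
  case (Suc j)
  then show ?case
    by (cases xs; cases ys) (auto simp: less_le)
qed simp

text \<open>The standard inversion of the BWT: row \<open>i\<close> of \<open>bwt_table (bwt T) j\<close> is the
  length-\<open>j\<close> prefix of the \<open>i\<close>-th smallest rotation of \<open>T\<close>.\<close>
fun bwt_table :: "nat list \<Rightarrow> nat \<Rightarrow> nat list list" where
  "bwt_table L 0 = replicate (length L) []"
| "bwt_table L (Suc j) = sort (map (\<lambda>(c, r). c # r) (zip L (bwt_table L j)))"

lemma bwt_table_bwt: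
  assumes v: "valid_text \<Sigma> T"
  shows "j \<le> length T \<Longrightarrow> bwt_table (bwt T) j = map (\<lambda>p. take j (rotate p T)) (sa T)"
proof (induction j)
  case 0
  then show ?case by (simp add: length_bwt length_sa map_replicate_const)
next
  case (Suc j)
  let ?n = "length T" and ?rows = "\<lambda>p. take (Suc j) (rotate p T)"
  have j: "j < ?n" using Suc.prems by simp
  have "map (\<lambda>(c, r). c # r) (zip (bwt T) (bwt_table (bwt T) j))
      = map (\<lambda>p. last (rotate p T) # take j (rotate p T)) (sa T)"
    using Suc.IH j by (simp add: bwt_eq_map_last_rotate zip_map_map zip_same_conv_map)
  also have "\<dots> = map (\<lambda>p. ?rows (p + (?n - 1))) (sa T)"
    using last_rotate_Cons_take_rotate[OF j] by simp
  finally have extended: "map (\<lambda>(c, r). c # r) (zip (bwt T) (bwt_table (bwt T) j))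
      = map (\<lambda>p. ?rows (p + (?n - 1))) (sa T)" .
  \<comment> \<open>prepending the BWT rotates every row by one position, which only permutes the rows\<close>
  have "mset (map (\<lambda>p. ?rows (p + (?n - 1))) (sa T)) = mset (map ?rows (sa T))"
    using mset_map_rotate_shift[of "take (Suc j)" "?n - 1" T] by (simp add: mset_sa mset_map)
  moreover have "sorted (map ?rows (sa T))"
  proof -
    have "sorted_wrt (\<lambda>p q. rotate p T < rotate q T) (sa T)"
      by (rule sorted_wrt_mono_rel[OF _ sorted_wrt_sa])
        (auto simp: set_sa intro: rotate_less_rotate_if_drop_less[OF v])
    then have "sorted_wrt (\<lambda>p q. ?rows p \<le> ?rows q) (sa T)"
      by (rule sorted_wrt_mono_rel[rotated]) (auto intro: take_le_take_lexorder)
    then show ?thesis by (simp add: sorted_map)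
  qed
  ultimately show ?case using extended by (simp add: properties_for_sort)
qed

lemma valid_text_rotate_eq_0:
  assumes v: "valid_text \<Sigma> T" and vr: "valid_text \<Sigma>' (rotate q T)" and q: "q < length T"
  shows "q = 0"
proof (rule ccontr)
  assume "q \<noteq> 0"
  let ?n = "length T"
  have T_ne: "T \<noteq> []" using q by auto
  have "rotate q T ! (?n - 1 - q) = last T"
    using q \<open>q \<noteq> 0\<close> by (simp add: nth_rotate last_conv_nth[OF T_ne])
  moreover have "?n - 1 - q < length (rotate q T) - 1" using q \<open>q \<noteq> 0\<close> by simp
  ultimately have "last (rotate q T) < last T"
    using vr unfolding valid_text_def by metis
  moreover have "last T < last (rotate q T)"
    using v q \<open>q \<noteq> 0\<close> by (simp add: last_rotate valid_text_def)
  ultimately show False by simp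
qed

lemma bwt_inj:
  assumes v1: "valid_text \<Sigma>1 T1" and v2: "valid_text \<Sigma>2 T2" and eq: "bwt T1 = bwt T2"
  shows "T1 = T2"
proof -
  have len: "length T1 = length T2" using eq by (metis length_bwt)
  have "map (\<lambda>p. rotate p T1) (sa T1) = map (\<lambda>p. rotate p T2) (sa T2)"
    using bwt_table_bwt[OF v1 order_refl] bwt_table_bwt[OF v2 order_refl] eq len by simp
  moreover have "T1 \<in> set (map (\<lambda>p. rotate p T1) (sa T1))"
    using v1 by (force simp: set_sa valid_text_def)
  ultimately obtain q where q: "q \<in> set (sa T2)" and T1: "T1 = rotate q T2"
    by auto
  have "q = 0"
    using valid_text_rotate_eq_0[OF v2, of \<Sigma>1 q] v1 T1 q by (simp add: set_sa)
  then show ?thesis using T1 by simp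
qed

section \<open>Crossing sequences of one-disk machines\<close>

lemma step_final: "final M (st c) \<Longrightarrow> step M c = c"
  by (simp add: step_def)

lemma step_nonfinal:
  assumes "\<not> final M (st c)" "delta M (st c) (tape c (pos c)) = (q, g, d)"
  shows "st (step M c) = q \<and> tape (step M c) = (tape c)(pos c := g) \<and>
    pos (step M c) = (case d of Lm \<Rightarrow> pos c - 1 | Rm \<Rightarrow> pos c + 1 | Sm \<Rightarrow> pos c) \<and>
    lastdir (step M c) = (if d = Sm then lastdir c else d) \<and>
    passes (step M c) = (if d = Sm \<or> d = lastdir c then passes c else passes c + 1)"
  using assms by (simp add: step_def)

lemma funpow_step_final_stays:
  "final M (st ((step M ^^ t) c)) \<Longrightarrow> (step M ^^ (t + d)) c = (step M ^^ t) c"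
  by (induction d) (simp_all add: step_final)

lemma funpow_step_final_eq:
  assumes "final M (st ((step M ^^ t1) c))" "final M (st ((step M ^^ t2) c))"
  shows "(step M ^^ t1) c = (step M ^^ t2) c"
  using funpow_step_final_stays[OF assms(1), of "t2 - t1"] funpow_step_final_stays[OF assms(2), of "t1 - t2"]
  by (cases "t1 \<le> t2") simp_all

lemma st_funpow_step_less:
  assumes mem: "uses_memory M m" and "st c < 2 ^ m"
  shows "st ((step M ^^ t) c) < 2 ^ m"
proof (induction t)
  case (Suc t)
  let ?c = "(step M ^^ t) c"
  show ?case
  proof (cases "final M (st ?c)")
    case False
    obtain q g d where dl: "delta M (st ?c) (tape ?c (pos ?c)) = (q, g, d)" by (metis prod_cases3)
    have "q < 2 ^ m" using mem Suc.IH dl unfolding uses_memory_def by (metis fst_conv)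
    then show ?thesis using step_nonfinal[OF False dl] by simp
  qed (use Suc.IH in \<open>simp add: step_final\<close>)
qed (simp add: assms)

lemma computes_without_memory:
  assumes "uses_memory M 0" and "computes M blank p w out"
  shows "disk_of blank out = disk_of blank w"
proof -
  obtain k where final: "final M (st ((step M ^^ k) (init blank w)))"
    and out: "tape ((step M ^^ k) (init blank w)) = disk_of blank out"
    using assms(2) unfolding computes_def Let_def by blast
  have "st ((step M ^^ k) (init blank w)) = st (init blank w)"
    using st_funpow_step_less[OF assms(1), of "init blank w" k] by (simp add: init_def)
  then have "(step M ^^ k) (init blank w) = init blank w"
    using final funpow_step_final_stays[of M 0 "init blank w" k] by simp
  then show ?thesis using out by (simp add: init_def)
qed

definition crosses_left :: "machine \<Rightarrow> nat \<Rightarrow> config \<Rightarrow> bool" where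
  "crosses_left M b c \<longleftrightarrow> \<not> final M (st c) \<and> pos c = b \<and> snd (snd (delta M (st c) (tape c (pos c)))) = Lm"

fun crossing_states :: "machine \<Rightarrow> nat \<Rightarrow> config \<Rightarrow> nat \<Rightarrow> nat list" where
  "crossing_states M b c 0 = []"
| "crossing_states M b c (Suc t) = crossing_states M b c t @
     (if crosses_left M b ((step M ^^ t) c) then [st ((step M ^^ Suc t) c)] else [])"

definition agree_below :: "nat \<Rightarrow> config \<Rightarrow> config \<Rightarrow> bool" where
  "agree_below b c d \<longleftrightarrow> (\<forall>i<b. tape c i = tape d i)"

definition left_equiv :: "nat \<Rightarrow> config \<Rightarrow> config \<Rightarrow> bool" where
  "left_equiv b c d \<longleftrightarrow> agree_below b c d \<and> (pos c < b \<longleftrightarrow> pos d < b) \<and>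
     (pos c < b \<longrightarrow> st c = st d \<and> pos c = pos d)"

lemma left_equiv_step:
  assumes "pos c < b" "left_equiv b c d"
  shows "left_equiv b (step M c) (step M d)"
proof -
  have same: "st c = st d" "pos c = pos d" "pos d < b" and agree: "agree_below b c d"
    using assms by (auto simp: left_equiv_def)
  have read: "tape c (pos c) = tape d (pos d)" using agree same assms(1) by (simp add: agree_below_def)
  show ?thesis
  proof (cases "final M (st c)")
    case False
    obtain q g d' where dl: "delta M (st c) (tape c (pos c)) = (q, g, d')" by (metis prod_cases3)
    have "\<not> final M (st d)" "delta M (st d) (tape d (pos d)) = (q, g, d')"
      using False dl same read by simp_all
    with step_nonfinal[OF False dl] show ?thesis
      using same agree step_nonfinal unfolding left_equiv_def agree_below_def
      by (auto split: dir.splits)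
  qed (use assms same in \<open>simp add: step_final\<close>)
qed

lemma step_right_of_boundary:
  assumes "b \<le> pos c" "\<not> crosses_left M b c"
  shows "b \<le> pos (step M c) \<and> agree_below b (step M c) c"
proof (cases "final M (st c)")
  case False
  obtain q g d where dl: "delta M (st c) (tape c (pos c)) = (q, g, d)" by (metis prod_cases3)
  have "d = Lm \<longrightarrow> pos c \<noteq> b" using assms(2) False dl by (auto simp: crosses_left_def)
  then show ?thesis using step_nonfinal[OF False dl] assms(1) unfolding agree_below_def
    by (auto split: dir.splits)
qed (use assms in \<open>simp add: step_final agree_below_def\<close>)

lemma step_crosses_left:
  assumes "crosses_left M b c" "0 < b"
  shows "pos (step M c) = b - 1 \<and> agree_below b (step M c) c"
proof -
  have nf: "\<not> final M (st c)" and p: "pos c = b" using assms by (auto simp: crosses_left_def)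
  obtain q g d where dl: "delta M (st c) (tape c (pos c)) = (q, g, d)" by (metis prod_cases3)
  have "d = Lm" using assms dl by (simp add: crosses_left_def)
  then show ?thesis using step_nonfinal[OF nf dl] p unfolding agree_below_def by auto
qed

lemma crossing_states_prefix: "t \<le> t' \<Longrightarrow> \<exists>r. crossing_states M b c t' = crossing_states M b c t @ r"
  by (induction t' rule: dec_induct) auto

lemma crossing_states_less:
  assumes "uses_memory M m" and "st c < 2 ^ m"
  shows "set (crossing_states M b c t) \<subseteq> {..<2 ^ m}"
  by (induction t) (auto simp: st_funpow_step_less[OF assms] simp del: funpow.simps)

lemma length_crossing_states_mono:
  "t \<le> t' \<Longrightarrow> length (crossing_states M b c t) \<le> length (crossing_states M b c t')"
  using crossing_states_prefix[of t t' M b c] by auto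

lemma no_crossing_if_crossing_states_eq:
  assumes "crossing_states M b c K = crossing_states M b c t'" "t' \<le> v" "v < K"
  shows "\<not> crosses_left M b ((step M ^^ v) c)"
proof
  assume "crosses_left M b ((step M ^^ v) c)"
  then have "length (crossing_states M b c (Suc v)) = Suc (length (crossing_states M b c v))" by simp
  moreover have "length (crossing_states M b c t') \<le> length (crossing_states M b c v)"
    using assms(2) by (rule length_crossing_states_mono)
  moreover have "length (crossing_states M b c (Suc v)) \<le> length (crossing_states M b c K)"
    using assms(3) by (intro length_crossing_states_mono) simp
  ultimately show False using assms(1) by simp
qed

lemma run_right_of_boundary:
  assumes "b \<le> pos ((step M ^^ t') c)"
    and "\<And>v. t' \<le> v \<Longrightarrow> v < u \<Longrightarrow> \<not> crosses_left M b ((step M ^^ v) c)"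
  shows "t' + d \<le> u \<Longrightarrow> b \<le> pos ((step M ^^ (t' + d)) c)
    \<and> agree_below b ((step M ^^ (t' + d)) c) ((step M ^^ t') c)
    \<and> crossing_states M b c (t' + d) = crossing_states M b c t'"
proof (induction d)
  case 0 then show ?case using assms by (simp add: agree_below_def)
next
  case (Suc d)
  then have IH: "b \<le> pos ((step M ^^ (t' + d)) c)"
      "agree_below b ((step M ^^ (t' + d)) c) ((step M ^^ t') c)"
      "crossing_states M b c (t' + d) = crossing_states M b c t'" by auto
  have no_cross: "\<not> crosses_left M b ((step M ^^ (t' + d)) c)" using assms(2) Suc.prems by simp
  with step_right_of_boundary[OF IH(1) no_cross] show ?case
    using IH unfolding agree_below_def by simp
qed

lemma next_left_crossing:
  assumes right: "b \<le> pos ((step M ^^ t') c)"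
    and seq: "crossing_states M b c K = crossing_states M b c t' @ s # rest"
  obtains u where "t' \<le> u" "crossing_states M b c u = crossing_states M b c t'"
    "crosses_left M b ((step M ^^ u) c)" "st ((step M ^^ Suc u) c) = s"
    "agree_below b ((step M ^^ u) c) ((step M ^^ t') c)"
proof -
  let ?cross = "\<lambda>v. t' \<le> v \<and> v < K \<and> crosses_left M b ((step M ^^ v) c)"
  have "t' \<le> K"
    using seq length_crossing_states_mono[of K t' M b c] by (cases "t' \<le> K") auto
  have "\<exists>v. ?cross v"
  proof (rule ccontr)
    assume "\<not> (\<exists>v. ?cross v)"
    then have "crossing_states M b c K = crossing_states M b c t'"
      using run_right_of_boundary[where u=K and d="K - t'", OF right] \<open>t' \<le> K\<close> by auto
    then show False using seq by simp
  qed
  define u where "u = (LEAST v. ?cross v)"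
  have u: "?cross u" unfolding u_def by (rule LeastI_ex) fact
  have no_cross: "\<not> crosses_left M b ((step M ^^ v) c)" if "t' \<le> v" "v < u" for v
    using not_less_Least[of v ?cross] that u unfolding u_def by auto
  from run_right_of_boundary[where u=u and d="u - t'", OF right no_cross] u
  have before: "agree_below b ((step M ^^ u) c) ((step M ^^ t') c)"
    "crossing_states M b c u = crossing_states M b c t'" by simp_all
  then have "crossing_states M b c (Suc u) = crossing_states M b c t' @ [st ((step M ^^ Suc u) c)]"
    using u by simp
  moreover obtain r where "crossing_states M b c K = crossing_states M b c (Suc u) @ r"
    using crossing_states_prefix[of "Suc u" K M b c] u by auto
  ultimately have "st ((step M ^^ Suc u) c) = s" using seq by simp
  with u before show ?thesis by (intro that) simp_all
qed

text \<open>The second run is advanced in lockstep while the first one is left of the boundary, and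
  jumps to its matching left crossing whenever the first one crosses.\<close>
lemma left_equiv_simulation:
  assumes b: "0 < b" and init: "left_equiv b cA cB"
    and seq: "crossing_states M b cA KA = crossing_states M b cB KB"
  shows "t \<le> KA \<Longrightarrow> \<exists>t'. left_equiv b ((step M ^^ t) cA) ((step M ^^ t') cB)
    \<and> crossing_states M b cA t = crossing_states M b cB t'"
proof (induction t)
  case 0 then show ?case using init by (intro exI[of _ 0]) simp
next
  case (Suc t)
  then obtain t' where equiv: "left_equiv b ((step M ^^ t) cA) ((step M ^^ t') cB)"
    and seq_t: "crossing_states M b cA t = crossing_states M b cB t'"
    by auto
  let ?a = "(step M ^^ t) cA" and ?c = "(step M ^^ t') cB"
  show ?case
  proof (cases "pos ?a < b")
    case True
    then have "left_equiv b (step M ?a) (step M ?c)" "pos ?c < b"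
      using equiv left_equiv_step by (auto simp: left_equiv_def)
    then show ?thesis using seq_t True by (intro exI[of _ "Suc t'"]) (simp add: crosses_left_def)
  next
    case False
    then have c_right: "b \<le> pos ?c" using equiv by (simp add: left_equiv_def)
    show ?thesis
    proof (cases "crosses_left M b ?a")
      case False
      with step_right_of_boundary[of b ?a M] \<open>\<not> pos ?a < b\<close>
      have "left_equiv b (step M ?a) ?c" using equiv c_right unfolding left_equiv_def agree_below_def by auto
      then show ?thesis using seq_t False by (intro exI[of _ t']) simp
    next
      case True
      let ?s = "st (step M ?a)"
      obtain r where "crossing_states M b cA KA = crossing_states M b cA (Suc t) @ r"
        using crossing_states_prefix[OF Suc.prems] by blast
      then have "crossing_states M b cB KB = crossing_states M b cB t' @ ?s # r"
        using seq seq_t True by simp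
      then obtain u where u: "crossing_states M b cB u = crossing_states M b cB t'"
        "crosses_left M b ((step M ^^ u) cB)" "st ((step M ^^ Suc u) cB) = ?s"
        "agree_below b ((step M ^^ u) cB) ?c"
        by (rule next_left_crossing[OF c_right])
      have "left_equiv b (step M ?a) (step M ((step M ^^ u) cB))"
        using step_crosses_left[OF True b] step_crosses_left[OF u(2) b] u(3,4) equiv
        unfolding left_equiv_def agree_below_def by auto
      moreover have "crossing_states M b cA (Suc t) = crossing_states M b cB (Suc u)"
        using True u seq_t by simp
      ultimately show ?thesis by (intro exI[of _ "Suc u"]) simp
    qed
  qed
qed

lemma agree_below_if_crossing_states_eq:
  assumes b: "0 < b" and init: "left_equiv b cA cB"
    and finalA: "final M (st ((step M ^^ KA) cA))" and finalB: "final M (st ((step M ^^ KB) cB))"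
    and seq: "crossing_states M b cA KA = crossing_states M b cB KB"
  shows "agree_below b ((step M ^^ KA) cA) ((step M ^^ KB) cB)"
proof -
  obtain t' where equiv: "left_equiv b ((step M ^^ KA) cA) ((step M ^^ t') cB)"
    and seq': "crossing_states M b cA KA = crossing_states M b cB t'"
    using left_equiv_simulation[OF b init seq, of KA] by auto
  have "agree_below b ((step M ^^ t') cB) ((step M ^^ KB) cB)"
  proof (cases "pos ((step M ^^ KA) cA) < b \<or> KB \<le> t'")
    case True
    then have "final M (st ((step M ^^ t') cB)) \<or> KB \<le> t'"
      using equiv finalA by (auto simp: left_equiv_def)
    then have "(step M ^^ t') cB = (step M ^^ KB) cB"
      using funpow_step_final_eq[OF _ finalB] funpow_step_final_stays[OF finalB, of "t' - KB"] by auto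
    then show ?thesis by (simp add: agree_below_def)
  next
    case False
    then have "b \<le> pos ((step M ^^ t') cB)" using equiv by (simp add: left_equiv_def)
    moreover have "\<not> crosses_left M b ((step M ^^ v) cB)" if "t' \<le> v" "v < KB" for v
      using no_crossing_if_crossing_states_eq[of M b cB KB t' v] seq seq' that by simp
    ultimately show ?thesis
      using run_right_of_boundary[where u=KB and d="KB - t'"] False
      unfolding agree_below_def by (metis le_add_diff_inverse nat_le_linear)
  qed
  then show ?thesis using equiv unfolding left_equiv_def agree_below_def by simp
qed

text \<open>After \<open>e\<close> left crossings the run has used about \<open>2 e\<close> passes; the refinements by
  the side of the boundary and the last direction make the bound inductive.\<close>
definition passes_bound :: "nat \<Rightarrow> config \<Rightarrow> nat \<Rightarrow> bool" where
  "passes_bound b c e \<longleftrightarrow> 1 \<le> passes c \<and>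
     (pos c < b \<longrightarrow> 2 * e \<le> passes c \<and> (lastdir c = Rm \<and> 0 < e \<longrightarrow> 2 * e + 1 \<le> passes c)) \<and>
     (b \<le> pos c \<longrightarrow> 2 * e + 1 \<le> passes c \<and> (lastdir c = Lm \<longrightarrow> 2 * e + 2 \<le> passes c))"

lemma passes_bound_step:
  assumes b: "0 < b" and inv: "passes_bound b c e"
  shows "passes_bound b (step M c) (e + (if crosses_left M b c then 1 else 0))"
proof (cases "final M (st c)")
  case True then show ?thesis using inv by (simp add: step_final crosses_left_def)
next
  case False
  obtain q g d where dl: "delta M (st c) (tape c (pos c)) = (q, g, d)" by (metis prod_cases3)
  note S = step_nonfinal[OF False dl]
  show ?thesis
  proof (cases d)
    case Lm
    then have "crosses_left M b c \<longleftrightarrow> pos c = b" using False dl by (simp add: crosses_left_def)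
    then show ?thesis using S inv Lm b unfolding passes_bound_def by (cases "pos c = b") auto
  next
    case Rm
    then have "\<not> crosses_left M b c" using dl by (simp add: crosses_left_def)
    then show ?thesis using S inv Rm unfolding passes_bound_def by (cases "pos c + 1 = b") auto
  next
    case Sm
    then have "\<not> crosses_left M b c" using dl by (simp add: crosses_left_def)
    then show ?thesis using S inv Sm unfolding passes_bound_def by auto
  qed
qed

lemma length_crossing_states_le_passes:
  assumes b: "0 < b"
  shows "length (crossing_states M b (init blank w) t) \<le> passes ((step M ^^ t) (init blank w))"
proof -
  have "passes_bound b ((step M ^^ t) (init blank w)) (length (crossing_states M b (init blank w) t))"
  proof (induction t)
    case 0 then show ?case using b by (simp add: passes_bound_def init_def)
  next
    case (Suc t)
    from passes_bound_step[OF b Suc.IH, of M] show ?case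
      by (cases "crosses_left M b ((step M ^^ t) (init blank w))") simp_all
  qed
  then show ?thesis unfolding passes_bound_def by (cases "pos ((step M ^^ t) (init blank w)) < b") auto
qed

lemma card_image_le_card_image_if_factors:
  assumes "finite (g ` A)" and "\<And>x y. x \<in> A \<Longrightarrow> y \<in> A \<Longrightarrow> g x = g y \<Longrightarrow> f x = f y"
  shows "card (f ` A) \<le> card (g ` A)"
proof -
  let ?h = "\<lambda>z. f (SOME x. x \<in> A \<and> g x = z)"
  have "?h (g x) = f x" if "x \<in> A" for x
    using someI_ex[of "\<lambda>y. y \<in> A \<and> g y = g x"] assms(2) that by blast
  then have "f ` A = ?h ` g ` A" by (simp add: image_image cong: image_cong)
  then show ?thesis using card_image_le[OF assms(1), of ?h] by simp
qed

lemma card_lists_length_le_pow: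
  assumes "1 \<le> m"
  shows "card {l. set l \<subseteq> {..<(2::nat) ^ m} \<and> length l \<le> p} \<le> 2 ^ (m * p + 1)"
proof -
  have "(\<Sum>i\<le>p. ((2::nat) ^ m) ^ i) \<le> 2 ^ (m * p + 1)"
  proof (induction p)
    case (Suc p)
    have "(\<Sum>i\<le>Suc p. ((2::nat) ^ m) ^ i) \<le> 2 ^ (m * p + 1) + 2 ^ (m * Suc p)"
      using Suc by (simp add: power_mult[symmetric])
    also have "(2::nat) ^ (m * p + 1) \<le> 2 ^ (m * Suc p)"
      using assms by (intro power_increasing) auto
    finally show ?case by simp
  qed simp
  then show ?thesis using card_lists_length_le[of "{..<(2::nat) ^ m}" p] by simp
qed

lemma take_eq_map_disk_of: "b \<le> length w \<Longrightarrow> take b w = map (disk_of blank w) [0..<b]"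
  by (rule nth_equalityI) (auto simp: disk_of_def)

lemma take_eq_take_if_computes_without_memory:
  assumes "uses_memory M 0" "computes M blank p w v" "b \<le> length w" "b \<le> length v"
  shows "take b v = take b w"
  using computes_without_memory[OF assms(1,2)] assms(3,4) by (metis take_eq_map_disk_of)

lemma output_prefix_eq_if_crossing_states_eq:
  assumes b: "0 < b" and same_input: "take b w = take b w'" "b \<le> length w" "b \<le> length w'"
    and halt: "final M (st ((step M ^^ K) (init blank w)))" "tape ((step M ^^ K) (init blank w)) = disk_of blank v"
    and halt': "final M (st ((step M ^^ K') (init blank w')))" "tape ((step M ^^ K') (init blank w')) = disk_of blank v'"
    and seq: "crossing_states M b (init blank w) K = crossing_states M b (init blank w') K'"
    and lengths: "b \<le> length v" "b \<le> length v'"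
  shows "take b v = take b v'"
proof -
  have "map (disk_of blank w) [0..<b] = map (disk_of blank w') [0..<b]"
    using same_input by (metis take_eq_map_disk_of)
  then have "left_equiv b (init blank w) (init blank w')"
    using b by (auto simp: left_equiv_def agree_below_def init_def)
  then have "agree_below b ((step M ^^ K) (init blank w)) ((step M ^^ K') (init blank w'))"
    using agree_below_if_crossing_states_eq[OF b _ halt(1) halt'(1) seq] by blast
  then have "map (disk_of blank v) [0..<b] = map (disk_of blank v') [0..<b]"
    using halt(2) halt'(2) by (simp add: agree_below_def)
  then show ?thesis using lengths by (metis take_eq_map_disk_of)
qed

text \<open>Since all inputs agree on their first \<open>b\<close> cells, the first \<open>b\<close> cells of the output are
  a function of the crossing sequence, a word of length at most \<open>p\<close> over the \<open>2 ^ m\<close> states.\<close>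
lemma card_output_prefixes_le:
  assumes b: "0 < b" and mem: "uses_memory M m"
    and runs: "\<And>x. x \<in> I \<Longrightarrow> take b (inp x) = u \<and> b \<le> length (inp x) \<and> b \<le> length (out x)
      \<and> computes M blank p (inp x) (out x)"
  shows "card ((\<lambda>x. take b (out x)) ` I) \<le> 2 ^ (m * p + 1)"
proof (cases "m = 0")
  case True
  then have "(\<lambda>x. take b (out x)) ` I \<subseteq> {u}"
    using take_eq_take_if_computes_without_memory runs mem by fastforce
  then have "card ((\<lambda>x. take b (out x)) ` I) \<le> card {u}" by (rule card_mono[rotated]) simp
  then show ?thesis by (simp add: order_trans)
next
  case False
  let ?c = "\<lambda>x. init blank (inp x)"
  let ?halts = "\<lambda>x k. final M (st ((step M ^^ k) (?c x)))
      \<and> passes ((step M ^^ k) (?c x)) \<le> p \<and> tape ((step M ^^ k) (?c x)) = disk_of blank (out x)"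
  have "\<forall>x\<in>I. \<exists>k. ?halts x k" using runs unfolding computes_def Let_def by blast
  then obtain K where K: "\<And>x. x \<in> I \<Longrightarrow> ?halts x (K x)" by (metis bchoice)
  let ?seq = "\<lambda>x. crossing_states M b (?c x) (K x)"
  let ?L = "{l. set l \<subseteq> {..<(2::nat) ^ m} \<and> length l \<le> p}"
  have "set (?seq x) \<subseteq> {..<2 ^ m}" "length (?seq x) \<le> p" if "x \<in> I" for x
    using crossing_states_less[OF mem, of "?c x"] length_crossing_states_le_passes[OF b, of M blank "inp x"]
      K[OF that] order_trans by (simp_all add: init_def) blast
  then have seq_L: "?seq ` I \<subseteq> ?L" by blast
  have fin_L: "finite ?L" by (rule finite_lists_length_le) simp
  have "card ((\<lambda>x. take b (out x)) ` I) \<le> card (?seq ` I)"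
  proof (rule card_image_le_card_image_if_factors)
    show "finite (?seq ` I)" using seq_L fin_L by (rule finite_subset)
    fix x y assume x: "x \<in> I" and y: "y \<in> I" and "?seq x = ?seq y"
    then show "take b (out x) = take b (out y)"
      using output_prefix_eq_if_crossing_states_eq[OF b, where w = "inp x" and w' = "inp y" and M = M
          and blank = blank and K = "K x" and v = "out x" and K' = "K y" and v' = "out y"]
        runs[OF x] runs[OF y] K[OF x] K[OF y] by simp
  qed
  also have "\<dots> \<le> card ?L" using fin_L seq_L by (rule card_mono)
  also have "\<dots> \<le> 2 ^ (m * p + 1)" using False by (intro card_lists_length_le_pow) simp
  finally show ?thesis .
qed

section \<open>Texts that are hard to transform\<close>

lemma valid_text_snoc:
  assumes "set (xs @ [z]) \<subseteq> \<Sigma>" and "\<forall>c\<in>set xs. z < c"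
  shows "valid_text \<Sigma> (xs @ [z])"
  using assms by (auto simp: valid_text_def nth_append)

definition fwd_text :: "nat \<Rightarrow> nat list \<Rightarrow> nat list" where
  "fwd_text k E = replicate k 3 @ 1 # E @ [0]"

definition inv_text :: "nat \<Rightarrow> nat list \<Rightarrow> nat list" where
  "inv_text k E = E @ 2 # replicate k 1 @ [0]"

lemma valid_fwd_text:
  assumes "set E \<subseteq> {1, 2}"
  shows "valid_text {0, 1, 2, 3} (fwd_text k E)"
proof -
  have "fwd_text k E = (replicate k 3 @ 1 # E) @ [0]" by (simp add: fwd_text_def)
  moreover have "valid_text {0, 1, 2, 3} ((replicate k 3 @ 1 # E) @ [0])"
    using assms by (intro valid_text_snoc) auto
  ultimately show ?thesis by simp
qed

lemma valid_inv_text: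
  assumes "set E \<subseteq> {2, 3}"
  shows "valid_text {0, 1, 2, 3} (inv_text k E)"
proof -
  have "inv_text k E = (E @ 2 # replicate k 1) @ [0]" by (simp add: inv_text_def)
  moreover have "valid_text {0, 1, 2, 3} ((E @ 2 # replicate k 1) @ [0])"
    using assms by (intro valid_text_snoc) auto
  ultimately show ?thesis by simp
qed

lemma length_fwd_text: "length (fwd_text k E) = length E + k + 2"
  by (simp add: fwd_text_def)

lemma length_inv_text: "length (inv_text k E) = length E + k + 2"
  by (simp add: inv_text_def)

lemma replicate_3_Cons_1_less_iff:
  "a \<noteq> c \<Longrightarrow> replicate a (3::nat) @ 1 # u < replicate c 3 @ 1 # v \<longleftrightarrow> a < c"
proof (induction a arbitrary: c)
  case 0 then show ?case by (cases c) auto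
next
  case (Suc a) then show ?case by (cases c) auto
qed

lemma replicate_1_snoc_0_less_iff: "replicate a (1::nat) @ [0] < replicate c 1 @ [0] \<longleftrightarrow> a < c"
proof (induction a arbitrary: c)
  case 0 then show ?case by (cases c) auto
next
  case (Suc a) then show ?case by (cases c) auto
qed

lemma drop_fwd_text_le: "y \<le> k \<Longrightarrow> drop y (fwd_text k E) = replicate (k - y) 3 @ 1 # E @ [0]"
  by (simp add: fwd_text_def)

lemma drop_fwd_text_gt:
  assumes "k < y" "y < length (fwd_text k E)" "set E \<subseteq> {1, 2}"
  shows "\<exists>c w. drop y (fwd_text k E) = c # w \<and> c < 3"
proof -
  have "fwd_text k E = (replicate k 3 @ [1]) @ (E @ [0])" by (simp add: fwd_text_def)
  then have "drop y (fwd_text k E) = drop (y - (k + 1)) (E @ [0])"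
    using assms(1) by (simp only: drop_append) simp
  also have "\<dots> = (E @ [0]) ! (y - (k + 1)) # drop (Suc (y - (k + 1))) (E @ [0])"
    using assms(1,2) by (intro Cons_nth_drop_Suc[symmetric]) (simp add: length_fwd_text)
  finally show ?thesis
    using nth_mem[of "y - (k + 1)" "E @ [0]"] assms by (force simp: length_fwd_text)
qed

lemma drop_inv_text_ge:
  assumes "length E = k - 1" "1 \<le> k" "k \<le> y" "y \<le> 2 * k"
  shows "drop y (inv_text k E) = replicate (2 * k - y) 1 @ [0]"
proof -
  have "inv_text k E = (E @ [2]) @ (replicate k 1 @ [0])" by (simp add: inv_text_def)
  then have "drop y (inv_text k E) = drop (y - k) (replicate k 1 @ [0])"
    using assms by (simp only: drop_append) simp
  then show ?thesis using assms by simp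
qed

lemma drop_inv_text_le:
  assumes "y \<le> length E" "set E \<subseteq> {2, 3}"
  shows "\<exists>c w. drop y (inv_text k E) = c # w \<and> 2 \<le> c"
proof (cases "y < length E")
  case True
  then show ?thesis
    using assms(2) by (auto simp: inv_text_def Cons_nth_drop_Suc[symmetric] dest!: nth_mem)
qed (use assms in \<open>simp add: inv_text_def\<close>)

text \<open>In \<open>fwd_text k E\<close> the \<open>k\<close> suffixes starting in the block of 3s are the largest ones,
  so they fill the last \<open>k\<close> rows of the suffix array, longest last.\<close>
lemma sa_fwd_text:
  assumes E: "length E = k - 1" "set E \<subseteq> {1, 2}" and t: "t < k"
  shows "sa (fwd_text k E) ! (k + 1 + t) = k - 1 - t"
proof -
  let ?T = "fwd_text k E"
  have n: "length ?T = 2 * k + 1" using E t by (simp add: length_fwd_text)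
  note drop_3s = drop_fwd_text_le[of _ k E]
  have "k - (k - 1 - t) = Suc t" using t by simp
  then have drop_x: "drop (k - 1 - t) ?T = replicate (Suc t) 3 @ 1 # E @ [0]"
    using drop_3s[of "k - 1 - t"] by (simp del: replicate_Suc)
  have less_iff: "drop y ?T < drop (k - 1 - t) ?T \<longleftrightarrow> k - y < Suc t" if "y \<le> k" "k - y \<noteq> Suc t" for y
    unfolding drop_3s[OF that(1)] drop_x by (rule replicate_3_Cons_1_less_iff[OF that(2)])
  have "{y. y < length ?T \<and> drop y ?T < drop (k - 1 - t) ?T} = {k - t..2 * k}"
  proof (intro set_eqI iffI)
    fix y assume y: "y \<in> {y. y < length ?T \<and> drop y ?T < drop (k - 1 - t) ?T}"
    show "y \<in> {k - t..2 * k}"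
    proof (rule ccontr)
      assume "y \<notin> {k - t..2 * k}"
      then have "y \<le> k" "Suc t \<le> k - y" using y n by auto
      show False
      proof (cases "k - y = Suc t")
        case True
        then have "y = k - 1 - t" using \<open>y \<le> k\<close> by simp
        then show False using y by simp
      qed (use y less_iff[of y] \<open>y \<le> k\<close> \<open>Suc t \<le> k - y\<close> in auto)
    qed
  next
    fix y assume y: "y \<in> {k - t..2 * k}"
    show "y \<in> {y. y < length ?T \<and> drop y ?T < drop (k - 1 - t) ?T}"
    proof (cases "y \<le> k")
      case True
      then have "k - y < Suc t" using y t by auto
      then show ?thesis using y n True less_iff[of y] by simp
    next
      case False
      then obtain c w where "drop y ?T = c # w" "c < 3" using drop_fwd_text_gt[of k y E] y n E by auto
      then show ?thesis using y n drop_x by simp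
    qed
  qed
  moreover have "card {k - t..2 * k} = k + 1 + t" using t by simp
  ultimately show ?thesis using sa_nth_card_less[of "k - 1 - t" ?T] n t by simp
qed

lemma drop_bwt_fwd_text:
  assumes E: "length E = k - 1" "1 \<le> k" "set E \<subseteq> {1, 2}"
  shows "drop (k + 1) (bwt (fwd_text k E)) = replicate (k - 1) 3 @ [0]"
proof (rule nth_equalityI)
  let ?T = "fwd_text k E"
  fix t assume "t < length (drop (k + 1) (bwt ?T))"
  then have t: "t < k" using E by (simp add: length_bwt length_fwd_text)
  then have "drop (k + 1) (bwt ?T) ! t = bwt ?T ! (k + 1 + t)"
    using E by (simp add: length_bwt length_fwd_text)
  also have "\<dots> = (if k - 1 - t = 0 then last ?T else ?T ! (k - 1 - t - 1))"
    using bwt_nth[of "k + 1 + t" ?T, unfolded sa_fwd_text[OF E(1,3) t]] t E by (simp add: length_fwd_text)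
  also have "\<dots> = (replicate (k - 1) 3 @ [0]) ! t"
    using t by (auto simp: fwd_text_def nth_append)
  finally show "drop (k + 1) (bwt ?T) ! t = (replicate (k - 1) 3 @ [0]) ! t" .
qed (use E in \<open>simp add: length_bwt length_fwd_text\<close>)

text \<open>In \<open>inv_text k E\<close> the suffixes \<open>1 ^ j 0\<close> are the \<open>k + 1\<close> smallest ones.\<close>
lemma sa_inv_text:
  assumes E: "length E = k - 1" "1 \<le> k" "set E \<subseteq> {2, 3}" and j: "j \<le> k"
  shows "sa (inv_text k E) ! j = 2 * k - j"
proof -
  let ?T = "inv_text k E"
  have n: "length ?T = 2 * k + 1" using E by (simp add: length_inv_text)
  note drop_1s = drop_inv_text_ge[OF E(1,2)]
  have "{y. y < length ?T \<and> drop y ?T < drop (2 * k - j) ?T} = {2 * k - j + 1..2 * k}"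
  proof (intro set_eqI)
    fix y
    show "y \<in> {y. y < length ?T \<and> drop y ?T < drop (2 * k - j) ?T} \<longleftrightarrow> y \<in> {2 * k - j + 1..2 * k}"
    proof (cases "k \<le> y \<and> y \<le> 2 * k")
      case True
      then have "drop y ?T < drop (2 * k - j) ?T \<longleftrightarrow> 2 * k - y < j"
        using drop_1s[of y] drop_1s[of "2 * k - j"] j replicate_1_snoc_0_less_iff by simp
      then show ?thesis using True j n by auto
    next
      case out_of_block: False
      show ?thesis
      proof (cases "y < k")
        case True
        then have "y \<le> length E" using E by simp
        then obtain c w where "drop y ?T = c # w" "2 \<le> c" using drop_inv_text_le[of y E k] E by blast
        moreover have "\<not> c # w < replicate j 1 @ [0]" using \<open>2 \<le> c\<close> by (cases j) auto
        ultimately show ?thesis using True drop_1s[of "2 * k - j"] j n by auto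
      qed (use out_of_block n in auto)
    qed
  qed
  moreover have "card {2 * k - j + 1..2 * k} = j" using j E by simp
  ultimately show ?thesis using sa_nth_card_less[of "2 * k - j" ?T] n by simp
qed

lemma take_bwt_inv_text:
  assumes E: "length E = k - 1" "1 \<le> k" "set E \<subseteq> {2, 3}"
  shows "take (k + 1) (bwt (inv_text k E)) = replicate k 1 @ [2]"
proof (rule nth_equalityI)
  let ?T = "inv_text k E"
  fix j assume "j < length (take (k + 1) (bwt ?T))"
  then have j: "j \<le> k" using E by (simp add: length_bwt length_inv_text)
  then have "take (k + 1) (bwt ?T) ! j = ?T ! (2 * k - j - 1)"
    using bwt_nth[of j ?T] sa_inv_text[OF E j] E by (simp add: length_inv_text)
  also have "\<dots> = (replicate k 1 @ [2]) ! j"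
  proof (cases "j = k")
    case False
    have "?T = (E @ [2]) @ (replicate k 1 @ [0])" by (simp add: inv_text_def)
    moreover have "2 * k - j - 1 = length (E @ [2]) + (k - j - 1)" using E j False by simp
    ultimately have "?T ! (2 * k - j - 1) = (replicate k 1 @ [0]) ! (k - j - 1)"
      by (simp only: nth_append_length_plus)
    then show ?thesis using j False by (simp add: nth_append)
  qed (use E in \<open>simp add: inv_text_def nth_append\<close>)
  finally show "take (k + 1) (bwt ?T) ! j = (replicate k 1 @ [2]) ! j" .
qed (use E in \<open>simp add: length_bwt length_inv_text\<close>)

lemma bwt_passes_lower_bound:
  assumes mem: "uses_memory M m" and k: "1 \<le> k"
    and computes: "\<And>T. valid_text {0, 1, 2, 3} T \<Longrightarrow> length T = 2 * k + 1 \<Longrightarrow> computes M blank p T (bwt T)"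
  shows "k \<le> m * p + 2"
proof -
  let ?I = "{E. set E \<subseteq> {1::nat, 2} \<and> length E = k - 1}"
  let ?prefix = "\<lambda>E. take (k + 1) (bwt (fwd_text k E))"
  have runs: "take (k + 1) (fwd_text k E) = replicate k 3 @ [1] \<and> k + 1 \<le> length (fwd_text k E)
      \<and> k + 1 \<le> length (bwt (fwd_text k E)) \<and> computes M blank p (fwd_text k E) (bwt (fwd_text k E))"
    if "E \<in> ?I" for E
    using that k computes[OF valid_fwd_text] by (simp add: fwd_text_def length_bwt length_fwd_text)
  have "card (?prefix ` ?I) \<le> 2 ^ (m * p + 1)"
    using card_output_prefixes_le[where b = "k + 1" and inp = "fwd_text k" and out = "\<lambda>E. bwt (fwd_text k E)"
        and I = ?I, OF _ mem runs]
    by simp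
  moreover have "inj_on ?prefix ?I"
  proof (rule inj_onI)
    fix E E' assume E: "E \<in> ?I" and E': "E' \<in> ?I" and eq: "?prefix E = ?prefix E'"
    have "drop (k + 1) (bwt (fwd_text k E)) = drop (k + 1) (bwt (fwd_text k E'))"
      using drop_bwt_fwd_text[of E k] drop_bwt_fwd_text[of E' k] E E' k by simp
    then have "bwt (fwd_text k E) = bwt (fwd_text k E')"
      using eq by (metis append_take_drop_id)
    then have "fwd_text k E = fwd_text k E'"
      using bwt_inj valid_fwd_text E E' by blast
    then show "E = E'" by (simp add: fwd_text_def)
  qed
  moreover have "card ?I = 2 ^ (k - 1)"
    using card_lists_length_eq[of "{1::nat, 2}" "k - 1"] by (simp add: numeral_2_eq_2)
  ultimately have "(2::nat) ^ (k - 1) \<le> 2 ^ (m * p + 1)" by (simp add: card_image)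
  then have "k - 1 \<le> m * p + 1" by (rule power_le_imp_le_exp[rotated]) simp
  then show ?thesis by simp
qed

lemma inverse_bwt_passes_lower_bound:
  assumes mem: "uses_memory M m" and k: "1 \<le> k"
    and computes: "\<And>T. valid_text {0, 1, 2, 3} T \<Longrightarrow> length T = 2 * k + 1 \<Longrightarrow> computes M blank p (bwt T) T"
  shows "k \<le> m * p + 2"
proof -
  let ?I = "{E. set E \<subseteq> {2::nat, 3} \<and> length E = k - 1}"
  have runs: "take (k + 1) (bwt (inv_text k E)) = replicate k 1 @ [2] \<and> k + 1 \<le> length (bwt (inv_text k E))
      \<and> k + 1 \<le> length (inv_text k E) \<and> computes M blank p (bwt (inv_text k E)) (inv_text k E)"
    if "E \<in> ?I" for E
    using that k computes[OF valid_inv_text] take_bwt_inv_text[of E k]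
    by (simp add: length_bwt length_inv_text)
  have "card ((\<lambda>E. take (k + 1) (inv_text k E)) ` ?I) \<le> 2 ^ (m * p + 1)"
    using card_output_prefixes_le[where b = "k + 1" and inp = "\<lambda>E. bwt (inv_text k E)" and out = "inv_text k"
        and I = ?I, OF _ mem runs]
    by simp
  moreover have "inj_on (\<lambda>E. take (k + 1) (inv_text k E)) ?I"
    using k by (intro inj_onI) (simp add: inv_text_def)
  moreover have "card ?I = 2 ^ (k - 1)"
    using card_lists_length_eq[of "{2::nat, 3}" "k - 1"] by (simp add: numeral_2_eq_2)
  ultimately have "(2::nat) ^ (k - 1) \<le> 2 ^ (m * p + 1)" by (simp add: card_image)
  then have "k - 1 \<le> m * p + 1" by (rule power_le_imp_le_exp[rotated]) simp
  then show ?thesis by simp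
qed

lemma small_o_eventually_odd_less:
  assumes "(\<lambda>n. real (f n)) \<in> o(\<lambda>n. real n)"
  obtains K where "\<And>k. K \<le> k \<Longrightarrow> f (2 * k + 1) + 2 < k"
proof -
  have "eventually (\<lambda>n. norm (real (f n)) \<le> 1 / 8 * norm (real n)) at_top"
    using landau_o.smallD[OF assms, of "1 / 8"] by simp
  then obtain N where N: "\<forall>n\<ge>N. real (f n) \<le> 1 / 8 * real n"
    unfolding eventually_at_top_linorder by auto
  have "f (2 * k + 1) + 2 < k" if "max 3 N \<le> k" for k
    using N[rule_format, of "2 * k + 1"] that by simp
  then show ?thesis by (rule that)
qed

theorem theorem7:
  shows "\<exists>\<Sigma> :: nat set. finite \<Sigma> \<and>
    (\<forall>(blank :: nat) (M :: nat \<Rightarrow> machine) (m :: nat \<Rightarrow> nat) (p :: nat \<Rightarrow> nat).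
       blank \<notin> \<Sigma> \<and> (\<forall>n. uses_memory (M n) (m n)) \<and>
       (\<lambda>n. real (m n * p n)) \<in> o(\<lambda>n. real n) \<longrightarrow>
         infinite {n. \<exists>T. valid_text \<Sigma> T \<and> length T = n \<and>
                           \<not> computes (M n) blank (p n) T (bwt T)} \<and>
         infinite {n. \<exists>T. valid_text \<Sigma> T \<and> length T = n \<and>
                           \<not> computes (M n) blank (p n) (bwt T) T})"
proof (intro exI[of _ "{0, 1, 2, 3}"] conjI allI impI)
  fix blank :: nat and M :: "nat \<Rightarrow> machine" and m p :: "nat \<Rightarrow> nat"
  assume "blank \<notin> {0, 1, 2, 3} \<and> (\<forall>n. uses_memory (M n) (m n)) \<and> (\<lambda>n. real (m n * p n)) \<in> o(\<lambda>n. real n)"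
  then have mem: "\<And>n. uses_memory (M n) (m n)" and small: "(\<lambda>n. real (m n * p n)) \<in> o(\<lambda>n. real n)"
    by auto
  obtain K where K: "\<And>k. K \<le> k \<Longrightarrow> m (2 * k + 1) * p (2 * k + 1) + 2 < k"
    using small_o_eventually_odd_less[OF small] by blast
  let ?fails = "\<lambda>inp out. {n. \<exists>T. valid_text {0, 1, 2, 3} T \<and> length T = n \<and>
    \<not> computes (M n) blank (p n) (inp T) (out T)}"
  have fails: "2 * k + 1 \<in> ?fails (\<lambda>T. T) bwt \<and> 2 * k + 1 \<in> ?fails bwt (\<lambda>T. T)" if "max 1 K \<le> k" for k
  proof -
    have "\<not> k \<le> m (2 * k + 1) * p (2 * k + 1) + 2" using K[of k] that by simp
    then show ?thesis
      using bwt_passes_lower_bound[OF mem[of "2 * k + 1"], where k = k and blank = blank and p = "p (2 * k + 1)"]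
        inverse_bwt_passes_lower_bound[OF mem[of "2 * k + 1"], where k = k and blank = blank and p = "p (2 * k + 1)"] that
      by auto
  qed
  have "\<exists>n\<ge>a. n \<in> ?fails (\<lambda>T. T) bwt \<and> n \<in> ?fails bwt (\<lambda>T. T)" for a
    using fails[of "max (max 1 K) a"] by (intro exI[of _ "2 * max (max 1 K) a + 1"]) simp
  then show "infinite (?fails (\<lambda>T. T) bwt)" "infinite (?fails bwt (\<lambda>T. T))"
    unfolding infinite_nat_iff_unbounded_le by blast+
qed simp

end
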